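(* The class of multi-modal antitone algebras is closed under canonical extensions: if $M=\langle A,\{\Box_b\}_{b\in B}\rangle$ is a multi-modal antitone algebra, then $\mathrm{Em}(M)=\langle\mathcal{P}(\mathrm{Ul}(A)),\{[Q_b]\}_{b\in B}\rangle$, with the operator $[Q_b]$ indexed by $\varphi(b)\in\varphi[B]$ (a Boolean subalgebra of $\mathcal{P}(\mathrm{Ul}(A))$), is a multi-modal antitone algebra.
   Context: A multi-modal antitone algebra is $\langle A,\{\Box_b\}_{b\in B}\rangle$ where $A$ is a Boolean algebra, $B$ is a Boolean subalgebra of $A$, and each $\Box_b\colon A\to A$ satisfies $\Box_b(1)=1$, $\Box_b(a\wedge c)=\Box_b(a)\wedge\Box_b(c)$, and $\Box_{b_1\vee b_2}(a)\le\Box_{b_1}(a)\wedge\Box_{b_2}(a)$ for all $a,c\in A$, $b,b_1,b_2\in B$. $\mathrm{Ul}(A)$ is the set of ultrafilters of $A$, $\varphi(a)=\{u\in\mathrm{Ul}(A):a\in u\}$. For $b\in B$ and $u,v\in\mathrm{Ul}(A)$: $Q_b(u,v)$ iff $\Box_b^{-1}[u]=\{a\in A:\Box_b(a)\in u\}\subseteq v$; $Q_b(u)=\{v:Q_b(u,v)\}$; and for $X\subseteq\mathrm{Ul}(A)$, $[Q_b](X)=\{u: Q_b(u)\subseteq X\}$. *)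

theory Defs
  imports Main
begin

definition boolean_algebra_on ::
  "'a set \<Rightarrow> ('a \<Rightarrow> 'a \<Rightarrow> 'a) \<Rightarrow> ('a \<Rightarrow> 'a \<Rightarrow> 'a) \<Rightarrow> ('a \<Rightarrow> 'a) \<Rightarrow> 'a \<Rightarrow> 'a \<Rightarrow> bool"
  where "boolean_algebra_on A jn mt cp tp bt \<longleftrightarrow>
     tp \<in> A \<and> bt \<in> A \<and>
     (\<forall>x\<in>A. \<forall>y\<in>A. jn x y \<in> A \<and> mt x y \<in> A) \<and> (\<forall>x\<in>A. cp x \<in> A) \<and>
     (\<forall>x\<in>A. \<forall>y\<in>A. jn x y = jn y x \<and> mt x y = mt y x) \<and>
     (\<forall>x\<in>A. \<forall>y\<in>A. \<forall>z\<in>A. jn (jn x y) z = jn x (jn y z) \<and> mt (mt x y) z = mt x (mt y z)) \<and>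
     (\<forall>x\<in>A. \<forall>y\<in>A. jn x (mt x y) = x \<and> mt x (jn x y) = x) \<and>
     (\<forall>x\<in>A. \<forall>y\<in>A. \<forall>z\<in>A. mt x (jn y z) = jn (mt x y) (mt x z)) \<and>
     (\<forall>x\<in>A. jn x (cp x) = tp \<and> mt x (cp x) = bt)"

definition subalgebra_on ::
  "'a set \<Rightarrow> ('a \<Rightarrow> 'a \<Rightarrow> 'a) \<Rightarrow> ('a \<Rightarrow> 'a \<Rightarrow> 'a) \<Rightarrow> ('a \<Rightarrow> 'a) \<Rightarrow> 'a \<Rightarrow> 'a \<Rightarrow> 'a set \<Rightarrow> bool"
  where "subalgebra_on A jn mt cp tp bt B \<longleftrightarrow>
     B \<subseteq> A \<and> tp \<in> B \<and> bt \<in> B \<and>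
     (\<forall>x\<in>B. \<forall>y\<in>B. jn x y \<in> B \<and> mt x y \<in> B) \<and> (\<forall>x\<in>B. cp x \<in> B)"

text \<open>Multi-modal antitone algebra \<open>\<langle>A, {Box b}_{b\<in>B}\<rangle>\<close>; the lattice order is
\<open>x \<le> y \<longleftrightarrow> x \<sqinter> y = x\<close>.\<close>

definition mm_antitone_algebra ::
  "'a set \<Rightarrow> ('a \<Rightarrow> 'a \<Rightarrow> 'a) \<Rightarrow> ('a \<Rightarrow> 'a \<Rightarrow> 'a) \<Rightarrow> ('a \<Rightarrow> 'a) \<Rightarrow> 'a \<Rightarrow> 'a
     \<Rightarrow> 'a set \<Rightarrow> ('a \<Rightarrow> 'a \<Rightarrow> 'a) \<Rightarrow> bool"
  where "mm_antitone_algebra A jn mt cp tp bt B Box \<longleftrightarrow>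
     boolean_algebra_on A jn mt cp tp bt \<and>
     subalgebra_on A jn mt cp tp bt B \<and>
     (\<forall>b\<in>B. \<forall>a\<in>A. Box b a \<in> A) \<and>
     (\<forall>b\<in>B. Box b tp = tp) \<and>
     (\<forall>b\<in>B. \<forall>a\<in>A. \<forall>c\<in>A. Box b (mt a c) = mt (Box b a) (Box b c)) \<and>
     (\<forall>b1\<in>B. \<forall>b2\<in>B. \<forall>a\<in>A.
        mt (Box (jn b1 b2) a) (mt (Box b1 a) (Box b2 a)) = Box (jn b1 b2) a)"

definition is_filter :: "'a::boolean_algebra set \<Rightarrow> bool"
  where "is_filter F \<longleftrightarrow> top \<in> F \<and>
     (\<forall>a c. a \<in> F \<and> c \<in> F \<longrightarrow> inf a c \<in> F) \<and>
     (\<forall>a c. a \<in> F \<and> a \<le> c \<longrightarrow> c \<in> F)"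

definition is_proper_filter :: "'a::boolean_algebra set \<Rightarrow> bool"
  where "is_proper_filter F \<longleftrightarrow> is_filter F \<and> bot \<notin> F"

definition Ul :: "'a::boolean_algebra set set"
  where "Ul = {u. is_proper_filter u \<and> (\<forall>F. is_proper_filter F \<and> u \<subseteq> F \<longrightarrow> F = u)}"

definition phi :: "'a::boolean_algebra \<Rightarrow> 'a set set"
  where "phi a = {u \<in> Ul. a \<in> u}"

definition Qrel :: "('a::boolean_algebra \<Rightarrow> 'a \<Rightarrow> 'a) \<Rightarrow> 'a \<Rightarrow> 'a set \<Rightarrow> 'a set \<Rightarrow> bool"
  where "Qrel Box b u v \<longleftrightarrow> {a. Box b a \<in> u} \<subseteq> v"

definition Qimg :: "('a::boolean_algebra \<Rightarrow> 'a \<Rightarrow> 'a) \<Rightarrow> 'a \<Rightarrow> 'a set \<Rightarrow> 'a set set"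
  where "Qimg Box b u = {v \<in> Ul. Qrel Box b u v}"

definition boxQ :: "('a::boolean_algebra \<Rightarrow> 'a \<Rightarrow> 'a) \<Rightarrow> 'a \<Rightarrow> 'a set set \<Rightarrow> 'a set set"
  where "boxQ Box b X = {u \<in> Ul. Qimg Box b u \<subseteq> X}"

text \<open>The operators of \<open>Em(M)\<close>, indexed by the elements \<open>\<phi>(b)\<close> of \<open>\<phi>[B]\<close>:
the operator indexed by \<open>\<phi>(b)\<close> is \<open>[Q_b]\<close>.\<close>

definition EmBox :: "'a::boolean_algebra set \<Rightarrow> ('a \<Rightarrow> 'a \<Rightarrow> 'a) \<Rightarrow> 'a set set \<Rightarrow> 'a set set \<Rightarrow> 'a set set"
  where "EmBox B Box Y X = boxQ Box (THE b. b \<in> B \<and> phi b = Y) X"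

end

theory Submission
  imports Defs
begin

text \<open>Stone's map \<open>\<phi>\<close> embeds \<open>A\<close> into \<open>\<P>(Ul(A))\<close>, so \<open>\<phi>[B]\<close> is a Boolean subalgebra and
\<open>\<phi>(b) \<mapsto> [Q\<^sub>b]\<close> is well defined; injectivity of \<open>\<phi>\<close> is where the ultrafilter theorem
(Zorn's lemma) enters. Each \<open>[Q\<^sub>b]\<close> is the box of a Kripke relation, so it preserves
\<open>Ul(A)\<close> and intersections whatever \<open>\<Box>\<^sub>b\<close> is. Antitonicity transfers: if
\<open>\<Box>\<^sub>b\<^sub>' a \<le> \<Box>\<^sub>b a\<close> for all \<open>a\<close>, then \<open>\<Box>\<^sub>b\<^sub>'\<^sup>-\<^sup>1[u] \<subseteq> \<Box>\<^sub>b\<^sup>-\<^sup>1[u]\<close> for every ultrafilter \<open>u\<close>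
because \<open>u\<close> is upward closed, hence \<open>Q\<^sub>b(u) \<subseteq> Q\<^sub>b\<^sub>'(u)\<close> and \<open>[Q\<^sub>b\<^sub>'](X) \<subseteq> [Q\<^sub>b](X)\<close>;
take \<open>b' = b\<^sub>1 \<squnion> b\<^sub>2\<close>.\<close>

lemma is_filter_top: "is_filter F \<Longrightarrow> top \<in> F"
  unfolding is_filter_def by blast

lemma is_filter_inf: "is_filter F \<Longrightarrow> a \<in> F \<Longrightarrow> c \<in> F \<Longrightarrow> inf a c \<in> F"
  unfolding is_filter_def by blast

lemma is_filter_upward: "is_filter F \<Longrightarrow> a \<in> F \<Longrightarrow> a \<le> c \<Longrightarrow> c \<in> F"
  unfolding is_filter_def by blast

lemma is_filter_adjoin:
  assumes F: "is_filter F"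
  shows "is_filter {c. \<exists>x\<in>F. inf x a \<le> c}"
  unfolding is_filter_def
proof (intro conjI allI impI)
  show "top \<in> {c. \<exists>x\<in>F. inf x a \<le> c}"
    using is_filter_top[OF F] by auto
next
  fix c d assume "c \<in> {c. \<exists>x\<in>F. inf x a \<le> c} \<and> d \<in> {c. \<exists>x\<in>F. inf x a \<le> c}"
  then obtain x y where "x \<in> F" "y \<in> F" "inf x a \<le> c" "inf y a \<le> d" by auto
  moreover have "inf (inf x y) a = inf (inf x a) (inf y a)"
    by (simp add: inf_aci)
  ultimately have "inf x y \<in> F" "inf (inf x y) a \<le> inf c d"
    using is_filter_inf[OF F] inf_mono[of "inf x a" c "inf y a" d] by simp_all
  then show "inf c d \<in> {c. \<exists>x\<in>F. inf x a \<le> c}" by blast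
next
  fix c d assume "c \<in> {c. \<exists>x\<in>F. inf x a \<le> c} \<and> c \<le> d"
  then show "d \<in> {c. \<exists>x\<in>F. inf x a \<le> c}" by (blast intro: order_trans)
qed

lemma Ul_is_filter: "u \<in> Ul \<Longrightarrow> is_filter u"
  by (simp add: Ul_def is_proper_filter_def)

lemma Ul_bot: "(u::'a::boolean_algebra set) \<in> Ul \<Longrightarrow> bot \<notin> u"
  by (simp add: Ul_def is_proper_filter_def)

lemma Ul_inf_iff:
  assumes "(u::'a::boolean_algebra set) \<in> Ul"
  shows "inf a c \<in> u \<longleftrightarrow> a \<in> u \<and> c \<in> u"
  using is_filter_inf is_filter_upward Ul_is_filter[OF assms] by (meson inf_le1 inf_le2)

lemma Ul_compl_iff:
  assumes u: "(u::'a::boolean_algebra set) \<in> Ul"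
  shows "- a \<in> u \<longleftrightarrow> a \<notin> u"
proof
  assume "- a \<in> u"
  then show "a \<notin> u" using Ul_inf_iff[OF u, of a "- a"] Ul_bot[OF u] by auto
next
  assume a: "a \<notin> u"
  define F where "F = {c. \<exists>x\<in>u. inf x a \<le> c}"
  have "is_filter F"
    unfolding F_def using is_filter_adjoin[OF Ul_is_filter[OF u]] .
  moreover have "u \<subseteq> F"
    unfolding F_def by (blast intro: inf_le1)
  moreover have "a \<in> F"
    unfolding F_def using is_filter_top[OF Ul_is_filter[OF u]] by auto
  ultimately have "\<not> is_proper_filter F"
    using u a unfolding Ul_def by blast
  with \<open>is_filter F\<close> obtain x where "x \<in> u" "inf x a \<le> bot"
    unfolding F_def is_proper_filter_def by auto
  then have "x \<le> - a" by (simp add: inf_shunt bot_unique)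
  with \<open>x \<in> u\<close> show "- a \<in> u" using is_filter_upward[OF Ul_is_filter[OF u]] by blast
qed

lemma Ul_sup_iff:
  assumes "(u::'a::boolean_algebra set) \<in> Ul"
  shows "sup a c \<in> u \<longleftrightarrow> a \<in> u \<or> c \<in> u"
proof -
  have "sup a c = - inf (- a) (- c)" by simp
  then show ?thesis using Ul_compl_iff[OF assms] Ul_inf_iff[OF assms] by metis
qed

lemma is_proper_filter_Union_chain:
  assumes "C \<noteq> {}" and proper: "\<And>F. F \<in> C \<Longrightarrow> is_proper_filter F"
    and chain: "\<And>F G. F \<in> C \<Longrightarrow> G \<in> C \<Longrightarrow> F \<subseteq> G \<or> G \<subseteq> F"
  shows "is_proper_filter (\<Union>C)"
proof -
  have filter: "is_filter F" and no_bot: "bot \<notin> F" if "F \<in> C" for F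
    using proper[OF that] by (simp_all add: is_proper_filter_def)
  have "inf a c \<in> \<Union>C" if "a \<in> \<Union>C" "c \<in> \<Union>C" for a c
  proof -
    from that obtain F G where "F \<in> C" "G \<in> C" "a \<in> F" "c \<in> G" by blast
    with chain obtain H where "H \<in> C" "a \<in> H" "c \<in> H" by blast
    then show ?thesis using is_filter_inf[OF filter] by blast
  qed
  moreover have "top \<in> \<Union>C"
    using \<open>C \<noteq> {}\<close> is_filter_top[OF filter] by blast
  moreover have "c \<in> \<Union>C" if "a \<in> \<Union>C" "a \<le> c" for a c
    using that is_filter_upward[OF filter] by blast
  ultimately show ?thesis
    unfolding is_proper_filter_def is_filter_def using no_bot by blast
qed

lemma Ul_exists:
  assumes "(d::'a::boolean_algebra) \<noteq> bot"
  shows "\<exists>u\<in>Ul. d \<in> u"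
proof -
  define P where "P = {F. is_proper_filter F \<and> d \<in> F}"
  have "is_filter {x. d \<le> x}"
    unfolding is_filter_def by (auto intro: order_trans)
  then have principal: "{x. d \<le> x} \<in> P"
    unfolding P_def is_proper_filter_def using assms by (simp add: bot_unique)
  have "\<exists>U\<in>P. \<forall>F\<in>C. F \<subseteq> U" if "C \<in> chains P" for C
  proof (cases "C = {}")
    case False
    with that have "\<Union>C \<in> P"
      using is_proper_filter_Union_chain[of C]
      by (auto simp: P_def chains_def chain_subset_def)
    then show ?thesis by blast
  qed (use principal in blast)
  then obtain M where "M \<in> P" "\<forall>F\<in>P. M \<subseteq> F \<longrightarrow> F = M"
    using Zorn_Lemma2[of P] by blast
  then have "M \<in> Ul" "d \<in> M"
    unfolding Ul_def P_def by blast+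
  then show ?thesis by blast
qed

lemma phi_subset_Ul: "phi a \<subseteq> Ul"
  by (auto simp: phi_def)

lemma phi_sup: "phi (sup a c) = phi a \<union> phi (c::'a::boolean_algebra)"
  unfolding phi_def by (auto simp: Ul_sup_iff)

lemma phi_inf: "phi (inf a c) = phi a \<inter> phi (c::'a::boolean_algebra)"
  unfolding phi_def by (auto simp: Ul_inf_iff)

lemma phi_compl: "phi (- a) = Ul - phi (a::'a::boolean_algebra)"
  unfolding phi_def by (auto simp: Ul_compl_iff)

lemma phi_top: "phi (top::'a::boolean_algebra) = Ul"
  unfolding phi_def by (auto simp: is_filter_top Ul_is_filter)

lemma phi_bot: "phi (bot::'a::boolean_algebra) = {}"
  unfolding phi_def by (auto simp: Ul_bot)

lemma phi_le_iff: "phi a \<subseteq> phi c \<longleftrightarrow> (a::'a::boolean_algebra) \<le> c"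
proof
  assume "phi a \<subseteq> phi c"
  show "a \<le> c"
  proof (rule ccontr)
    assume "\<not> a \<le> c"
    then have "inf a (- c) \<noteq> bot" by (simp add: inf_shunt)
    then obtain u where "u \<in> Ul" "inf a (- c) \<in> u" using Ul_exists by blast
    then have "u \<in> phi a" "u \<notin> phi c"
      by (simp_all add: phi_def Ul_inf_iff Ul_compl_iff)
    with \<open>phi a \<subseteq> phi c\<close> show False by blast
  qed
next
  assume "a \<le> c"
  then show "phi a \<subseteq> phi c" by (metis phi_inf inf.absorb1 Int_lower2)
qed

lemma inj_phi: "inj (phi :: 'a::boolean_algebra \<Rightarrow> 'a set set)"
  by (rule injI) (metis phi_le_iff order.antisym order.refl)

lemma boolean_algebra_on_Pow: "boolean_algebra_on (Pow U) (\<union>) (\<inter>) (\<lambda>X. U - X) U {}"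
  unfolding boolean_algebra_on_def by auto

lemma subalgebra_on_phi_image:
  assumes "subalgebra_on UNIV sup inf uminus top bot (B::'a::boolean_algebra set)"
  shows "subalgebra_on (Pow Ul) (\<union>) (\<inter>) (\<lambda>X. Ul - X) Ul {} (phi ` B)"
  unfolding subalgebra_on_def
proof (intro conjI ballI)
  show "phi ` B \<subseteq> Pow Ul" using phi_subset_Ul by blast
  show "Ul \<in> phi ` B" "{} \<in> phi ` B"
    using assms by (auto simp: subalgebra_on_def simp flip: phi_top phi_bot)
next
  fix X Y assume "X \<in> phi ` B" "Y \<in> phi ` B"
  then obtain a c where "a \<in> B" "c \<in> B" "X = phi a" "Y = phi c" by blast
  then show "X \<union> Y \<in> phi ` B" "X \<inter> Y \<in> phi ` B"
    using assms by (auto simp: subalgebra_on_def simp flip: phi_sup phi_inf)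
next
  fix X assume "X \<in> phi ` B"
  then show "Ul - X \<in> phi ` B"
    using assms by (auto simp: subalgebra_on_def simp flip: phi_compl)
qed

lemma boxQ_subset_Ul: "boxQ Box b X \<subseteq> Ul"
  by (auto simp: boxQ_def)

lemma boxQ_Ul: "boxQ Box b Ul = Ul"
  by (auto simp: boxQ_def Qimg_def)

lemma boxQ_Int: "boxQ Box b (X \<inter> Y) = boxQ Box b X \<inter> boxQ Box b Y"
  by (auto simp: boxQ_def)

lemma Qimg_antimono_Box:
  assumes "u \<in> Ul" "\<And>a. Box b' a \<le> Box b a"
  shows "Qimg Box b u \<subseteq> Qimg Box b' u"
proof -
  have "{a. Box b' a \<in> u} \<subseteq> {a. Box b a \<in> u}"
    using assms is_filter_upward[OF Ul_is_filter] by blast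
  then show ?thesis by (auto simp: Qimg_def Qrel_def)
qed

lemma boxQ_mono_Box:
  assumes "\<And>a. Box b' a \<le> Box b a"
  shows "boxQ Box b' X \<subseteq> boxQ Box b X"
  using Qimg_antimono_Box[of _ Box b' b, OF _ assms] by (auto simp: boxQ_def)

lemma EmBox_phi: "b \<in> B \<Longrightarrow> EmBox B Box (phi b) X = boxQ Box b X"
  unfolding EmBox_def
  by (rule arg_cong[where f="\<lambda>b. boxQ Box b X"], rule the_equality) (auto dest: injD[OF inj_phi])

lemma EmBox_sup_subset:
  assumes "b1 \<in> B" "b2 \<in> B" "sup b1 b2 \<in> B"
    and "\<And>a. Box (sup b1 b2) a \<le> inf (Box b1 a) (Box b2 a)"
  shows "EmBox B Box (phi b1 \<union> phi b2) X \<subseteq> EmBox B Box (phi b1) X \<inter> EmBox B Box (phi b2) X"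
proof -
  have "EmBox B Box (phi b1 \<union> phi b2) X = boxQ Box (sup b1 b2) X"
    using EmBox_phi[OF assms(3)] by (simp add: phi_sup)
  also have "\<dots> \<subseteq> boxQ Box b1 X \<inter> boxQ Box b2 X"
    using assms(4) by (intro Int_greatest boxQ_mono_Box) (auto simp: le_inf_iff)
  finally show ?thesis
    by (simp add: EmBox_phi assms(1,2))
qed

theorem theorem3p3:
  fixes B :: "'a::boolean_algebra set" and Box :: "'a \<Rightarrow> 'a \<Rightarrow> 'a"
  assumes "mm_antitone_algebra UNIV sup inf uminus top bot B Box"
  shows "mm_antitone_algebra (Pow Ul) (\<union>) (\<inter>) (\<lambda>X. Ul - X) Ul {} (phi ` B) (EmBox B Box)"
proof -
  have subalg: "subalgebra_on UNIV sup inf uminus top bot B"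
    and sup_closed: "\<And>b1 b2. b1 \<in> B \<Longrightarrow> b2 \<in> B \<Longrightarrow> sup b1 b2 \<in> B"
    and antitone: "\<And>b1 b2 a. b1 \<in> B \<Longrightarrow> b2 \<in> B \<Longrightarrow>
                     Box (sup b1 b2) a \<le> inf (Box b1 a) (Box b2 a)"
    using assms by (auto simp: mm_antitone_algebra_def subalgebra_on_def le_iff_inf inf_commute)
  show ?thesis
    unfolding mm_antitone_algebra_def
  proof (intro conjI ballI boolean_algebra_on_Pow subalgebra_on_phi_image[OF subalg])
    fix Y X Z
    show "EmBox B Box Y X \<in> Pow Ul" "EmBox B Box Y Ul = Ul"
      "EmBox B Box Y (X \<inter> Z) = EmBox B Box Y X \<inter> EmBox B Box Y Z"
      by (simp_all add: EmBox_def boxQ_subset_Ul boxQ_Ul boxQ_Int)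
  next
    fix Y1 Y2 X assume "Y1 \<in> phi ` B" "Y2 \<in> phi ` B"
    then obtain b1 b2 where b: "b1 \<in> B" "b2 \<in> B" "Y1 = phi b1" "Y2 = phi b2" by blast
    have "EmBox B Box (phi b1 \<union> phi b2) X \<subseteq> EmBox B Box (phi b1) X \<inter> EmBox B Box (phi b2) X"
      using b(1,2) by (intro EmBox_sup_subset sup_closed antitone)
    with b show "EmBox B Box (Y1 \<union> Y2) X \<inter> (EmBox B Box Y1 X \<inter> EmBox B Box Y2 X)
          = EmBox B Box (Y1 \<union> Y2) X"
      by blast
  qed
qed

end
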